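(* If $(U,\le)$ is an $\mathrm{OST}$-monoid, then addition in the semiring $U$ is compatible with the ordering: for all $x,y,z\in U$, $x\le y$ implies $x+z\le y+z$.
   Context: A supertropical monoid is a commutative monoid $(U,\cdot)$ with absorbing element $0$ and distinguished idempotent $e$ with $ex=0\Rightarrow x=0$, together with a total ordering $\le_M$ on $M:=eU$, compatible with multiplication and with $0$ least, making $M$ a bipotent semiring. The addition on $U$ is $x+y:=y$ if $ex<ey$, $x$ if $ex>ey$, $ex$ if $ex=ey$ (for OST-monoids this makes $U$ a semiring). An OST-monoid is a supertropical monoid $U$ with a total ordering $\le$ on $U$ such that: (OST1) $x\le y\Rightarrow xz\le yz$; (OST2) for $x,y\in M$, $x\le y\Leftrightarrow x\le_M y$; (OST3) $0\le1\le e$. *)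

theory Defs
  imports Main
begin

text \<open>A supertropical monoid on the whole type 'a: multiplication mul, unit one,
absorbing zero, distinguished idempotent e, and a total order leM on M = eU.\<close>

definition ghost_set :: "('a \<Rightarrow> 'a \<Rightarrow> 'a) \<Rightarrow> 'a \<Rightarrow> 'a set" where
  "ghost_set mul e = range (mul e)"

definition supertropical_monoid ::
  "('a \<Rightarrow> 'a \<Rightarrow> 'a) \<Rightarrow> 'a \<Rightarrow> 'a \<Rightarrow> 'a \<Rightarrow> ('a \<Rightarrow> 'a \<Rightarrow> bool) \<Rightarrow> bool" where
  "supertropical_monoid mul one zero e leM \<longleftrightarrow>
     (\<forall>x y z. mul (mul x y) z = mul x (mul y z)) \<and>
     (\<forall>x y. mul x y = mul y x) \<and>
     (\<forall>x. mul one x = x) \<and>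
     (\<forall>x. mul zero x = zero) \<and>
     mul e e = e \<and>
     (\<forall>x. mul e x = zero \<longrightarrow> x = zero) \<and>
     (\<forall>x\<in>ghost_set mul e. leM x x) \<and>
     (\<forall>x\<in>ghost_set mul e. \<forall>y\<in>ghost_set mul e. leM x y \<and> leM y x \<longrightarrow> x = y) \<and>
     (\<forall>x\<in>ghost_set mul e. \<forall>y\<in>ghost_set mul e. \<forall>z\<in>ghost_set mul e.
        leM x y \<and> leM y z \<longrightarrow> leM x z) \<and>
     (\<forall>x\<in>ghost_set mul e. \<forall>y\<in>ghost_set mul e. leM x y \<or> leM y x) \<and>
     (\<forall>x\<in>ghost_set mul e. \<forall>y\<in>ghost_set mul e. \<forall>z\<in>ghost_set mul e.
        leM x y \<longrightarrow> leM (mul x z) (mul y z)) \<and>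
     (\<forall>x\<in>ghost_set mul e. leM zero x)"

definition st_add ::
  "('a \<Rightarrow> 'a \<Rightarrow> 'a) \<Rightarrow> 'a \<Rightarrow> ('a \<Rightarrow> 'a \<Rightarrow> bool) \<Rightarrow> 'a \<Rightarrow> 'a \<Rightarrow> 'a" where
  "st_add mul e leM x y =
     (if mul e x = mul e y then mul e x
      else if leM (mul e x) (mul e y) then y
      else x)"

definition OST_monoid ::
  "('a \<Rightarrow> 'a \<Rightarrow> 'a) \<Rightarrow> 'a \<Rightarrow> 'a \<Rightarrow> 'a \<Rightarrow> ('a \<Rightarrow> 'a \<Rightarrow> bool) \<Rightarrow> ('a \<Rightarrow> 'a \<Rightarrow> bool) \<Rightarrow> bool" where
  "OST_monoid mul one zero e leM le \<longleftrightarrow>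
     supertropical_monoid mul one zero e leM \<and>
     (\<forall>x. le x x) \<and>
     (\<forall>x y. le x y \<and> le y x \<longrightarrow> x = y) \<and>
     (\<forall>x y z. le x y \<and> le y z \<longrightarrow> le x z) \<and>
     (\<forall>x y. le x y \<or> le y x) \<and>
     (\<forall>x y z. le x y \<longrightarrow> le (mul x z) (mul y z)) \<and>
     (\<forall>x\<in>ghost_set mul e. \<forall>y\<in>ghost_set mul e. le x y \<longleftrightarrow> leM x y) \<and>
     le zero one \<and> le one e"

end

theory Submission
  imports Defs
begin

text \<open>Since \<open>1 \<le> e\<close>, every element lies below its ghost \<open>ex\<close>, and a strict inequality
\<open>ex < ey\<close> between ghosts forces \<open>x < y\<close>. Hence \<open>x + z\<close> dominates both \<open>x\<close> and \<open>z\<close>, and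
\<open>x \<le> y\<close> gives \<open>x + z \<le> y + z\<close> by comparing \<open>ex\<close> with \<open>ez\<close>: if \<open>ex < ez\<close> then
\<open>x + z = z\<close>, if \<open>ex > ez\<close> then \<open>x + z = x \<le> y\<close>, and if \<open>ex = ez\<close> then \<open>x + z = ex\<close>,
which lies below \<open>y + z\<close> in both remaining cases \<open>ey = ez\<close> and \<open>ey > ez\<close>.\<close>

locale OST =
  fixes mul :: "'a \<Rightarrow> 'a \<Rightarrow> 'a" and one zero e :: 'a
    and leM le :: "'a \<Rightarrow> 'a \<Rightarrow> bool"
  assumes OST_monoid: "OST_monoid mul one zero e leM le"
begin

abbreviation add :: "'a \<Rightarrow> 'a \<Rightarrow> 'a" where
  "add \<equiv> st_add mul e leM"

lemma supertropical: "supertropical_monoid mul one zero e leM"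
  using OST_monoid unfolding OST_monoid_def by blast

lemma le_refl: "le x x"
  and le_antisym: "le x y \<Longrightarrow> le y x \<Longrightarrow> x = y"
  and le_trans: "le x y \<Longrightarrow> le y z \<Longrightarrow> le x z"
  and le_total: "le x y \<or> le y x"
  and le_mult_right: "le x y \<Longrightarrow> le (mul x z) (mul y z)"
  and le_iff_leM: "x \<in> ghost_set mul e \<Longrightarrow> y \<in> ghost_set mul e \<Longrightarrow> le x y \<longleftrightarrow> leM x y"
  and le_one_e: "le one e"
  using OST_monoid unfolding OST_monoid_def by blast+

lemma mul_assoc: "mul (mul x y) z = mul x (mul y z)"
  and mul_comm: "mul x y = mul y x"
  and mul_one_left: "mul one x = x"
  and e_idem: "mul e e = e"
  using supertropical unfolding supertropical_monoid_def by blast+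

lemma ghost_in_ghost_set: "mul e x \<in> ghost_set mul e"
  by (simp add: ghost_set_def)

lemma ghost_ghost: "mul e (mul e x) = mul e x"
  by (metis mul_assoc e_idem)

lemma le_ghost: "le x (mul e x)"
  using le_mult_right[OF le_one_e, of x] by (simp add: mul_one_left)

lemma ghost_mono: "le x y \<Longrightarrow> le (mul e x) (mul e y)"
  by (metis le_mult_right mul_comm)

lemma le_of_ghost_less:
  assumes "le (mul e x) (mul e y)" and "mul e x \<noteq> mul e y"
  shows "le x y"
  using assms ghost_mono le_antisym le_total by metis

lemma st_add_eq:
  "add x z = (if mul e x = mul e z then mul e x
              else if le (mul e x) (mul e z) then z else x)"
  unfolding st_add_def by (simp add: le_iff_leM ghost_in_ghost_set)

lemma le_st_add_left: "le x (add x z)"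
  using st_add_eq[of x z] le_refl le_ghost le_of_ghost_less by metis

lemma le_st_add_right: "le z (add x z)"
  using st_add_eq[of x z] le_refl le_ghost le_total le_antisym le_of_ghost_less by metis

lemma st_add_mono_left:
  assumes "le x y"
  shows "le (add x z) (add y z)"
proof -
  have exy: "le (mul e x) (mul e y)"
    using assms by (rule ghost_mono)
  consider "mul e x = mul e z" | "mul e x \<noteq> mul e z" "le (mul e x) (mul e z)"
    | "\<not> le (mul e x) (mul e z)"
    by blast
  then show ?thesis
  proof cases
    case 1
    show ?thesis
    proof (cases "mul e y = mul e z")
      case True
      then show ?thesis using 1 exy by (simp add: st_add_eq)
    next
      case False
      have "le (mul e x) y"
        using le_of_ghost_less[of "mul e x" y] exy 1 False by (simp add: ghost_ghost)
      moreover have "\<not> le (mul e y) (mul e z)"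
        using 1 False exy le_antisym by metis
      ultimately show ?thesis using 1 False by (simp add: st_add_eq)
    qed
  next
    case 2
    then have "add x z = z" by (simp add: st_add_eq)
    then show ?thesis using le_st_add_right by metis
  next
    case 3
    then have "add x z = x" using le_refl by (auto simp: st_add_eq)
    then show ?thesis using assms le_st_add_left le_trans by metis
  qed
qed

end

theorem theorem61p5:
  fixes mul :: "'a \<Rightarrow> 'a \<Rightarrow> 'a" and one zero e :: 'a
    and leM le :: "'a \<Rightarrow> 'a \<Rightarrow> bool"
  assumes "OST_monoid mul one zero e leM le"
  shows "\<forall>x y z. le x y \<longrightarrow> le (st_add mul e leM x z) (st_add mul e leM y z)"
proof -
  interpret OST mul one zero e leM le
    using assms by (rule OST.intro)
  show ?thesis
    using st_add_mono_left by blast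
qed

end
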